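(* Let $X,Y,Z$ be random variables on finite alphabets $\mathcal{X},\mathcal{Y},\mathcal{Z}$ with $H(Z\mid X,Y)=0$. Define the synergistic information $\operatorname{Syn}(X,Y\to Z)=I(X;Z\mid Y)-\operatorname{Un}(X\to Z\mid Y)$ with $\operatorname{Un}$ as below. Then $\operatorname{Syn}(X,Y\to Z)\ge 0$.
   Context: For each $y\in\mathcal{Y}$ with $\Pr(Y=y)>0$, let $(A_y,B_y,C_y)$ be the random triple on $\mathcal{X}\times\mathcal{Y}\times\mathcal{Z}$ with $\Pr(A_y=x,B_y=y',C_y=z)=0$ if $\Pr(Z=z)=0$ and $\Pr(A_y=x,B_y=y',C_y=z)=\Pr(X=x,Y=y',Z=z)\Pr(Z=z\mid Y=y)/\Pr(Z=z)$ otherwise. The unique information is $\operatorname{Un}(X\to Z\mid Y)=\sum_{y:\Pr(Y=y)>0}\Pr(Y=y)\,I(A_y;C_y)$, where $I$ is (conditional) mutual information and $H$ Shannon entropy. *)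

theory Defs
  imports "HOL-Probability.Probability_Mass_Function"
begin

text \<open>Information quantities are measured in bits (log base 2); outcomes of probability
  zero contribute 0 (convention 0 log 0 = 0).\<close>

definition pXYZ :: "('x \<times> 'y \<times> 'z) pmf \<Rightarrow> 'x \<Rightarrow> 'y \<Rightarrow> 'z \<Rightarrow> real" where
  "pXYZ p x y z = pmf p (x, y, z)"

definition pXY :: "('x::finite \<times> 'y \<times> 'z::finite) pmf \<Rightarrow> 'x \<Rightarrow> 'y \<Rightarrow> real" where
  "pXY p x y = (\<Sum>z\<in>UNIV. pXYZ p x y z)"

definition pYZ :: "('x::finite \<times> 'y \<times> 'z::finite) pmf \<Rightarrow> 'y \<Rightarrow> 'z \<Rightarrow> real" where
  "pYZ p y z = (\<Sum>x\<in>UNIV. pXYZ p x y z)"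

definition pY :: "('x::finite \<times> 'y \<times> 'z::finite) pmf \<Rightarrow> 'y \<Rightarrow> real" where
  "pY p y = (\<Sum>x\<in>UNIV. \<Sum>z\<in>UNIV. pXYZ p x y z)"

definition pZ :: "('x::finite \<times> 'y::finite \<times> 'z::finite) pmf \<Rightarrow> 'z \<Rightarrow> real" where
  "pZ p z = (\<Sum>x\<in>UNIV. \<Sum>y\<in>UNIV. pXYZ p x y z)"

definition cond_entropy_Z_XY :: "('x::finite \<times> 'y::finite \<times> 'z::finite) pmf \<Rightarrow> real" where
  "cond_entropy_Z_XY p =
     - (\<Sum>x\<in>UNIV. \<Sum>y\<in>UNIV. \<Sum>z\<in>UNIV.
          if pXYZ p x y z > 0 then pXYZ p x y z * log 2 (pXYZ p x y z / pXY p x y) else 0)"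

definition cond_mi_XZ_Y :: "('x::finite \<times> 'y::finite \<times> 'z::finite) pmf \<Rightarrow> real" where
  "cond_mi_XZ_Y p =
     (\<Sum>x\<in>UNIV. \<Sum>y\<in>UNIV. \<Sum>z\<in>UNIV.
        if pXYZ p x y z > 0 then
          pXYZ p x y z * log 2 (pXYZ p x y z * pY p y / (pXY p x y * pYZ p y z))
        else 0)"

definition mutual_info :: "('a::finite \<Rightarrow> 'c::finite \<Rightarrow> real) \<Rightarrow> real" where
  "mutual_info q =
     (\<Sum>a\<in>UNIV. \<Sum>c\<in>UNIV.
        if q a c > 0 then
          q a c * log 2 (q a c / ((\<Sum>c'\<in>UNIV. q a c') * (\<Sum>a'\<in>UNIV. q a' c)))
        else 0)"

text \<open>Joint mass function of the triple (A_y, B_y, C_y).\<close>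
definition tilt :: "('x::finite \<times> 'y::finite \<times> 'z::finite) pmf \<Rightarrow> 'y \<Rightarrow> 'x \<Rightarrow> 'y \<Rightarrow> 'z \<Rightarrow> real" where
  "tilt p y x y' z =
     (if pZ p z = 0 then 0
      else pXYZ p x y' z * (pYZ p y z / pY p y) / pZ p z)"

definition unique_info :: "('x::finite \<times> 'y::finite \<times> 'z::finite) pmf \<Rightarrow> real" where
  "unique_info p =
     (\<Sum>y\<in>{y. pY p y > 0}. pY p y * mutual_info (\<lambda>x z. \<Sum>y'\<in>UNIV. tilt p y x y' z))"

definition syn_info :: "('x::finite \<times> 'y::finite \<times> 'z::finite) pmf \<Rightarrow> real" where
  "syn_info p = cond_mi_XZ_Y p - unique_info p"

end

theory Submission
  imports Defs
begin

text \<open>Expanding the logarithm gives the chain rule I(X;Z|Y) = H(Z|Y) - H(Z|X,Y).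
  In the triple (A_y, B_y, C_y) the variable C_y is distributed as Z given Y = y, so
  I(A_y;C_y) \<le> H(C_y) = H(Z | Y = y); averaging over y yields Un(X \<rightarrow> Z | Y) \<le> H(Z|Y).
  Hence Syn(X,Y \<rightarrow> Z) \<ge> -H(Z|X,Y), which vanishes when Z is a function of (X,Y).\<close>

text \<open>No case split on zero masses is needed: the factor in front of the logarithm
  annihilates the junk value of log 2 (1 / 0).\<close>
definition shannon_entropy :: "('c::finite \<Rightarrow> real) \<Rightarrow> real" where
  "shannon_entropy q = (\<Sum>c\<in>UNIV. q c * log 2 (1 / q c))"

definition cond_entropy_Z_Y :: "('x::finite \<times> 'y::finite \<times> 'z::finite) pmf \<Rightarrow> real" where
  "cond_entropy_Z_Y p = (\<Sum>y\<in>UNIV. \<Sum>z\<in>UNIV. pYZ p y z * log 2 (pY p y / pYZ p y z))"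

lemma pXYZ_nonneg: "pXYZ p x y z \<ge> 0"
  by (simp add: pXYZ_def)

lemma pYZ_nonneg: "pYZ p y z \<ge> 0"
  unfolding pYZ_def by (intro sum_nonneg) (simp add: pXYZ_nonneg)

lemma pY_eq_sum_pYZ: "pY p y = (\<Sum>z\<in>UNIV. pYZ p y z)"
  unfolding pY_def pYZ_def by (rule sum.swap)

lemma pZ_eq_sum_pYZ: "pZ p z = (\<Sum>y\<in>UNIV. pYZ p y z)"
  unfolding pZ_def pYZ_def by (rule sum.swap)

lemma pY_nonneg: "pY p y \<ge> 0"
  unfolding pY_eq_sum_pYZ by (intro sum_nonneg) (simp add: pYZ_nonneg)

lemma pZ_nonneg: "pZ p z \<ge> 0"
  unfolding pZ_eq_sum_pYZ by (intro sum_nonneg) (simp add: pYZ_nonneg)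

lemma pXYZ_le_pXY: "pXYZ p x y z \<le> pXY p x y"
  unfolding pXY_def by (rule member_le_sum) (auto simp: pXYZ_nonneg)

lemma pXYZ_le_pYZ: "pXYZ p x y z \<le> pYZ p y z"
  unfolding pYZ_def by (rule member_le_sum) (auto simp: pXYZ_nonneg)

lemma pYZ_le_pY: "pYZ p y z \<le> pY p y"
  unfolding pY_eq_sum_pYZ by (rule member_le_sum) (auto simp: pYZ_nonneg)

lemma pYZ_le_pZ: "pYZ p y z \<le> pZ p z"
  unfolding pZ_eq_sum_pYZ by (rule member_le_sum) (auto simp: pYZ_nonneg)

lemma cond_mi_term_split:
  assumes "pXYZ p x y z > 0"
  shows "pXYZ p x y z * log 2 (pXYZ p x y z * pY p y / (pXY p x y * pYZ p y z))
       = pXYZ p x y z * log 2 (pXYZ p x y z / pXY p x y) + pXYZ p x y z * log 2 (pY p y / pYZ p y z)"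
proof -
  have "pXY p x y > 0" "pYZ p y z > 0"
    using pXYZ_le_pXY[of p x y z] pXYZ_le_pYZ[of p x y z] assms by linarith+
  moreover from this(2) have "pY p y > 0"
    using pYZ_le_pY[of p y z] by linarith
  ultimately have "log 2 (pXYZ p x y z * pY p y / (pXY p x y * pYZ p y z))
     = log 2 (pXYZ p x y z / pXY p x y) + log 2 (pY p y / pYZ p y z)"
    using assms log_mult[of 2 "pXYZ p x y z / pXY p x y" "pY p y / pYZ p y z"] by simp
  then show ?thesis
    by (simp add: distrib_left)
qed

lemma cond_mi_XZ_Y_chain_rule:
  fixes p :: "('x::finite \<times> 'y::finite \<times> 'z::finite) pmf"
  shows "cond_mi_XZ_Y p = cond_entropy_Z_Y p - cond_entropy_Z_XY p"
proof -
  let ?h = "\<lambda>x y z. pXYZ p x y z * log 2 (pY p y / pYZ p y z)"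
  have split: "(if pXYZ p x y z > 0
        then pXYZ p x y z * log 2 (pXYZ p x y z * pY p y / (pXY p x y * pYZ p y z)) else 0)
      = (if pXYZ p x y z > 0 then pXYZ p x y z * log 2 (pXYZ p x y z / pXY p x y) else 0) + ?h x y z"
    for x y z
    using cond_mi_term_split[of p x y z] pXYZ_nonneg[of p x y z]
    by (cases "pXYZ p x y z > 0") auto
  have "cond_mi_XZ_Y p = (\<Sum>x\<in>UNIV. \<Sum>y\<in>UNIV. \<Sum>z\<in>UNIV.
      (if pXYZ p x y z > 0 then pXYZ p x y z * log 2 (pXYZ p x y z / pXY p x y) else 0) + ?h x y z)"
    unfolding cond_mi_XZ_Y_def split ..
  also have "\<dots> = - cond_entropy_Z_XY p + (\<Sum>x\<in>UNIV. \<Sum>y\<in>UNIV. \<Sum>z\<in>UNIV. ?h x y z)"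
    unfolding cond_entropy_Z_XY_def by (simp add: sum.distrib)
  also have "(\<Sum>x\<in>UNIV. \<Sum>y\<in>UNIV. \<Sum>z\<in>UNIV. ?h x y z) = (\<Sum>y\<in>UNIV. \<Sum>z\<in>UNIV. \<Sum>x\<in>UNIV. ?h x y z)"
    by (subst sum.swap) (rule sum.cong[OF refl], rule sum.swap)
  also have "\<dots> = cond_entropy_Z_Y p"
    unfolding cond_entropy_Z_Y_def pYZ_def by (simp add: sum_distrib_right)
  finally show ?thesis
    by simp
qed

text \<open>Each term only drops the factor q a c / P(A = a) \<le> 1 inside the logarithm.\<close>
lemma mutual_info_le_shannon_entropy:
  fixes q :: "'a::finite \<Rightarrow> 'c::finite \<Rightarrow> real"
  assumes nonneg: "\<And>a c. q a c \<ge> 0"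
  shows "mutual_info q \<le> shannon_entropy (\<lambda>c. \<Sum>a\<in>UNIV. q a c)"
proof -
  have "mutual_info q \<le> (\<Sum>a\<in>UNIV. \<Sum>c\<in>UNIV. q a c * log 2 (1 / (\<Sum>a'\<in>UNIV. q a' c)))"
    unfolding mutual_info_def
  proof (intro sum_mono)
    fix a c
    let ?A = "\<Sum>c'\<in>UNIV. q a c'" and ?C = "\<Sum>a'\<in>UNIV. q a' c"
    show "(if q a c > 0 then q a c * log 2 (q a c / (?A * ?C)) else 0) \<le> q a c * log 2 (1 / ?C)"
    proof (cases "q a c > 0")
      case True
      have "q a c \<le> ?A" "q a c \<le> ?C"
        by (rule member_le_sum; auto simp: nonneg)+
      with True have "?A > 0" "?C > 0" "log 2 (q a c / ?A) \<le> 0"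
        by (simp_all add: divide_le_eq_1)
      moreover have "log 2 (q a c / (?A * ?C)) = log 2 (q a c / ?A) + log 2 (1 / ?C)"
        using calculation True log_mult[of 2 "q a c / ?A" "1 / ?C"] by simp
      ultimately show ?thesis
        using True by (simp add: mult_left_mono)
    next
      case False
      then show ?thesis
        using nonneg[of a c] by simp
    qed
  qed
  also have "\<dots> = shannon_entropy (\<lambda>c. \<Sum>a\<in>UNIV. q a c)"
    unfolding shannon_entropy_def by (subst sum.swap) (simp add: sum_distrib_right)
  finally show ?thesis .
qed

lemma tilt_nonneg: "tilt p y x y' z \<ge> 0"
  unfolding tilt_def
  using pXYZ_nonneg[of p x y' z] pYZ_nonneg[of p y z] pY_nonneg[of p y] pZ_nonneg[of p z]
  by simp

lemma tilt_marginal_Z: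
  fixes p :: "('x::finite \<times> 'y::finite \<times> 'z::finite) pmf"
  shows "(\<Sum>x\<in>UNIV. \<Sum>y'\<in>UNIV. tilt p y x y' z) = pYZ p y z / pY p y"
proof (cases "pZ p z = 0")
  case True
  then have "pYZ p y z = 0"
    using pYZ_le_pZ[of p y z] pYZ_nonneg[of p y z] by linarith
  with True show ?thesis
    by (simp add: tilt_def)
next
  case False
  then have "tilt p y x y' z = pXYZ p x y' z * ((pYZ p y z / pY p y) / pZ p z)" for x y'
    by (simp add: tilt_def)
  then have "(\<Sum>x\<in>UNIV. \<Sum>y'\<in>UNIV. tilt p y x y' z)
      = (\<Sum>x\<in>UNIV. \<Sum>y'\<in>UNIV. pXYZ p x y' z) * ((pYZ p y z / pY p y) / pZ p z)"
    by (simp only: sum_distrib_right)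
  also have "(\<Sum>x\<in>UNIV. \<Sum>y'\<in>UNIV. pXYZ p x y' z) = pZ p z"
    by (simp add: pZ_def)
  finally show ?thesis
    using False by simp
qed

lemma unique_info_le_cond_entropy_Z_Y:
  fixes p :: "('x::finite \<times> 'y::finite \<times> 'z::finite) pmf"
  shows "unique_info p \<le> cond_entropy_Z_Y p"
proof -
  let ?H = "\<lambda>y. \<Sum>z\<in>UNIV. pYZ p y z * log 2 (pY p y / pYZ p y z)"
  have "pY p y * mutual_info (\<lambda>x z. \<Sum>y'\<in>UNIV. tilt p y x y' z) \<le> ?H y"
    if "pY p y > 0" for y
  proof -
    have "mutual_info (\<lambda>x z. \<Sum>y'\<in>UNIV. tilt p y x y' z)
        \<le> shannon_entropy (\<lambda>z. pYZ p y z / pY p y)"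
      using mutual_info_le_shannon_entropy[of "\<lambda>x z. \<Sum>y'\<in>UNIV. tilt p y x y' z"]
      by (simp add: sum_nonneg tilt_nonneg tilt_marginal_Z)
    also have "pY p y * shannon_entropy (\<lambda>z. pYZ p y z / pY p y) = ?H y"
      using that by (simp add: shannon_entropy_def sum_distrib_left)
    finally show ?thesis
      using that by (simp add: mult_left_mono)
  qed
  then have "unique_info p \<le> (\<Sum>y\<in>{y. pY p y > 0}. ?H y)"
    unfolding unique_info_def by (intro sum_mono) simp
  also have "\<dots> = cond_entropy_Z_Y p"
    unfolding cond_entropy_Z_Y_def
  proof (rule sum.mono_neutral_left)
    show "\<forall>y\<in>UNIV - {y. pY p y > 0}. ?H y = 0"
    proof
      fix y
      assume "y \<in> UNIV - {y. pY p y > 0}"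
      then have "pYZ p y z = 0" for z
        using pYZ_le_pY[of p y z] pYZ_nonneg[of p y z] by auto
      then show "?H y = 0"
        by simp
    qed
  qed auto
  finally show ?thesis .
qed

lemma syn_info_ge_neg_cond_entropy_Z_XY:
  fixes p :: "('x::finite \<times> 'y::finite \<times> 'z::finite) pmf"
  shows "syn_info p \<ge> - cond_entropy_Z_XY p"
  using unique_info_le_cond_entropy_Z_Y[of p]
  by (simp add: syn_info_def cond_mi_XZ_Y_chain_rule)

theorem corollary4:
  fixes p :: "('x::finite \<times> 'y::finite \<times> 'z::finite) pmf"
  assumes "cond_entropy_Z_XY p = 0"
  shows "syn_info p \<ge> 0"
  using syn_info_ge_neg_cond_entropy_Z_XY[of p] assms by simp

end
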